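(* Let $\lambda\in\mathbb R$ with $\alpha=1-\lambda>0$, and let $\mathcal Q_\lambda$ be a $\lambda$-exponential family satisfying Assumptions A and B. Let $x_1,\dots,x_N\in\mathcal X$ satisfy $x_i\in S_\vartheta$ for all $i$ and all $\vartheta\in\operatorname{dom}\varphi_\lambda$. Let $\tau>0$, $\vartheta'\in\operatorname{dom}\varphi_\lambda$, and suppose $\vartheta_P\in\operatorname{dom}\varphi_\lambda$ satisfies $$q^{(\alpha)}_{\vartheta_P}(T)=M:=\frac{N\tau}{1+N\tau}\cdot\frac1N\sum_{i=1}^NT(x_i)+\frac1{1+N\tau}q^{(\alpha)}_{\vartheta'}(T).$$ Consider the proximal loss $L(\vartheta)=-\sum_{i=1}^N\log q_\vartheta(x_i)+\frac1\tau RD_\alpha(q_{\vartheta'},q_\vartheta)$ on $\operatorname{dom}\varphi_\lambda$. (i) If $\lambda=0$, $\vartheta_P$ minimizes $L$ over $\operatorname{dom}\varphi_\lambda$, i.e. $\vartheta_P\in\operatorname{prox}_\tau^{-\sum_i\log q_\cdot(x_i)}(\vartheta')$. (ii) If $\lambda<0$ (resp. $\lambda>0$), $\vartheta_P$ minimizes over $\operatorname{dom}\varphi_\lambda$ the function $U(\vartheta)=\frac{1+N\tau}{\tau}\big(\varphi_\lambda(\vartheta)-c_\lambda(\vartheta,M)\big)+\frac1\tau\psi_\lambda(\vartheta')$, which is an upper bound (resp. lower bound) of $L$ on $\operatorname{dom}\varphi_\lambda$.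
   Context: $\mathcal H$ is a finite-dimensional real Hilbert space; $\mathcal X$ a measurable space with measure $m$; $p(f)=\int fp\,dm$. Conventions $\log s=-\infty$ for $s\le0$, $\exp(-\infty)=0$. Coupling $c_\lambda(u,v)=\frac1\lambda\log(1+\lambda\langle u,v\rangle)$ ($\lambda\ne0$), $c_0=\langle\cdot,\cdot\rangle$. For measurable $T:\mathcal X\to\mathcal H$: $\varphi_\lambda(\vartheta)=\log\int\exp(c_\lambda(\vartheta,T))dm$, $\operatorname{dom}\varphi_\lambda=\{\varphi_\lambda<+\infty\}$, $q_\vartheta=\exp(c_\lambda(\vartheta,T)-\varphi_\lambda(\vartheta))$, $\mathcal Q_\lambda=\{q_\vartheta:\vartheta\in\operatorname{dom}\varphi_\lambda\}$, support $S_\vartheta=\{x:1+\lambda\langle\vartheta,T(x)\rangle>0\}$. Escort $p^{(\alpha)}=p^\alpha/\int p^\alpha dm$; $p_{|Y}=p\mathbf 1_Y$. Rényi entropy $H_\alpha(p)=\frac1{1-\alpha}\log\int p^\alpha dm$ ($\alpha\ne1$), $H_1(p)=-\int p\log p\,dm$; $\psi_\lambda(\vartheta)=-H_\alpha(q_\vartheta)$. Rényi divergence $RD_\alpha(p_1,p_2)=\frac1{\alpha-1}\log\int p_1^\alpha p_2^{1-\alpha}dm$ ($\alpha\ne1$), $RD_1=KL$. Rényi proximal operator $\operatorname{prox}^f_\tau(\vartheta')=\arg\min_{\vartheta\in\operatorname{dom}\varphi_\lambda}f(\vartheta)+\frac1\tau RD_\alpha(q_{\vartheta'},q_\vartheta)$.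 Compatibility: $p$ is $q_\vartheta$-compatible if $\int p_{|S_\vartheta}^\alpha dm\in(0,\infty)$ and $\int Tp_{|S_\vartheta}^\alpha dm$ has finite components; $\mathcal Q_\lambda$-compatible if for every $\vartheta$. Assumption A: $\alpha>0$ and $\varphi_\lambda$ proper (never $-\infty$, nonempty domain). Assumption B: there is a nonempty $S_\lambda$ with $S_\vartheta=S_\lambda$ for all $\vartheta\in\operatorname{dom}\varphi_\lambda$, and each $q_\vartheta\in\mathcal Q_\lambda$ is $\mathcal Q_\lambda$-compatible. *)

theory Defs
  imports "HOL-Analysis.Analysis"
begin

definition elog :: "real \<Rightarrow> ereal" where
  "elog s = (if s > 0 then ereal (ln s) else -\<infinity>)"

definition elog_enn :: "ennreal \<Rightarrow> ereal" where
  "elog_enn z = (if z = 0 then -\<infinity> else if z = top then \<infinity> else ereal (ln (enn2real z)))"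

definition clam :: "real \<Rightarrow> 'h::euclidean_space \<Rightarrow> 'h \<Rightarrow> ereal" where
  "clam l u v = (if l = 0 then ereal (u \<bullet> v) else ereal (1 / l) * elog (1 + l * (u \<bullet> v)))"

definition expc :: "real \<Rightarrow> 'h::euclidean_space \<Rightarrow> 'h \<Rightarrow> real" where
  "expc l u v = (if 1 + l * (u \<bullet> v) > 0 then exp (real_of_ereal (clam l u v)) else 0)"

definition Zlam :: "'x measure \<Rightarrow> ('x \<Rightarrow> 'h::euclidean_space) \<Rightarrow> real \<Rightarrow> 'h \<Rightarrow> ennreal" where
  "Zlam m T l \<theta> = (\<integral>\<^sup>+ x. ennreal (expc l \<theta> (T x)) \<partial>m)"

definition philam :: "'x measure \<Rightarrow> ('x \<Rightarrow> 'h::euclidean_space) \<Rightarrow> real \<Rightarrow> 'h \<Rightarrow> ereal" where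
  "philam m T l \<theta> = elog_enn (Zlam m T l \<theta>)"

definition dom_phi :: "'x measure \<Rightarrow> ('x \<Rightarrow> 'h::euclidean_space) \<Rightarrow> real \<Rightarrow> 'h set" where
  "dom_phi m T l = {\<theta>. philam m T l \<theta> < \<infinity>}"

text \<open>Density q_theta = exp(c_lambda(theta,T) - phi_lambda(theta)) (used for theta in the domain).\<close>
definition qlam :: "'x measure \<Rightarrow> ('x \<Rightarrow> 'h::euclidean_space) \<Rightarrow> real \<Rightarrow> 'h \<Rightarrow> 'x \<Rightarrow> real" where
  "qlam m T l \<theta> x = expc l \<theta> (T x) * exp (- real_of_ereal (philam m T l \<theta>))"

definition supp :: "'x measure \<Rightarrow> ('x \<Rightarrow> 'h::euclidean_space) \<Rightarrow> real \<Rightarrow> 'h \<Rightarrow> 'x set" where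
  "supp m T l \<theta> = {x \<in> space m. 1 + l * (\<theta> \<bullet> T x) > 0}"

definition expect :: "'x measure \<Rightarrow> ('x \<Rightarrow> real) \<Rightarrow> ('x \<Rightarrow> 'b::{banach,second_countable_topology}) \<Rightarrow> 'b" where
  "expect m p f = (\<integral> x. p x *\<^sub>R f x \<partial>m)"

definition escort :: "'x measure \<Rightarrow> real \<Rightarrow> ('x \<Rightarrow> real) \<Rightarrow> 'x \<Rightarrow> real" where
  "escort m \<alpha> p x = p x powr \<alpha> / (\<integral> y. p y powr \<alpha> \<partial>m)"

definition compatible :: "'x measure \<Rightarrow> ('x \<Rightarrow> 'h::euclidean_space) \<Rightarrow> real \<Rightarrow> real \<Rightarrow> ('x \<Rightarrow> real) \<Rightarrow> 'h \<Rightarrow> bool" where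
  "compatible m T l \<alpha> p \<theta> \<longleftrightarrow>
     (let S = supp m T l \<theta> in
       (\<integral>\<^sup>+ x. ennreal ((p x * indicator S x) powr \<alpha>) \<partial>m) \<in> {0<..<top} \<and>
       integrable m (\<lambda>x. (p x * indicator S x) powr \<alpha> *\<^sub>R T x))"

definition renyi_entropy :: "'x measure \<Rightarrow> real \<Rightarrow> ('x \<Rightarrow> real) \<Rightarrow> real" where
  "renyi_entropy m \<alpha> p =
     (if \<alpha> = 1 then - (\<integral> x. p x * ln (p x) \<partial>m)
      else 1 / (1 - \<alpha>) * ln (\<integral> x. p x powr \<alpha> \<partial>m))"

definition psilam :: "'x measure \<Rightarrow> ('x \<Rightarrow> 'h::euclidean_space) \<Rightarrow> real \<Rightarrow> 'h \<Rightarrow> real" where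
  "psilam m T l \<theta> = - renyi_entropy m (1 - l) (qlam m T l \<theta>)"

definition KL :: "'x measure \<Rightarrow> ('x \<Rightarrow> real) \<Rightarrow> ('x \<Rightarrow> real) \<Rightarrow> ereal" where
  "KL m p1 p2 = ereal (\<integral> x. (if p1 x > 0 then p1 x * ln (p1 x / p2 x) else 0) \<partial>m)"

definition renyi_div :: "'x measure \<Rightarrow> real \<Rightarrow> ('x \<Rightarrow> real) \<Rightarrow> ('x \<Rightarrow> real) \<Rightarrow> ereal" where
  "renyi_div m \<alpha> p1 p2 =
     (if \<alpha> = 1 then KL m p1 p2
      else ereal (1 / (\<alpha> - 1)) *
             elog_enn (\<integral>\<^sup>+ x. ennreal (p1 x powr \<alpha> * p2 x powr (1 - \<alpha>)) \<partial>m))"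

definition prox :: "'x measure \<Rightarrow> ('x \<Rightarrow> 'h::euclidean_space) \<Rightarrow> real \<Rightarrow> ('h \<Rightarrow> ereal) \<Rightarrow> real \<Rightarrow> 'h \<Rightarrow> 'h set" where
  "prox m T l f \<tau> \<theta>' =
     {\<theta> \<in> dom_phi m T l. \<forall>\<eta> \<in> dom_phi m T l.
        f \<theta> + ereal (1 / \<tau>) * renyi_div m (1 - l) (qlam m T l \<theta>') (qlam m T l \<theta>)
        \<le> f \<eta> + ereal (1 / \<tau>) * renyi_div m (1 - l) (qlam m T l \<theta>') (qlam m T l \<eta>)}"

definition assumption_A :: "'x measure \<Rightarrow> ('x \<Rightarrow> 'h::euclidean_space) \<Rightarrow> real \<Rightarrow> bool" where
  "assumption_A m T l \<longleftrightarrow> 1 - l > 0 \<and> (\<forall>\<theta>. philam m T l \<theta> \<noteq> -\<infinity>) \<and> dom_phi m T l \<noteq> {}"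

definition assumption_B :: "'x measure \<Rightarrow> ('x \<Rightarrow> 'h::euclidean_space) \<Rightarrow> real \<Rightarrow> bool" where
  "assumption_B m T l \<longleftrightarrow>
     (\<exists>S. S \<noteq> {} \<and> (\<forall>\<theta> \<in> dom_phi m T l. supp m T l \<theta> = S)) \<and>
     (\<forall>\<theta> \<in> dom_phi m T l. \<forall>\<eta> \<in> dom_phi m T l. compatible m T l (1 - l) (qlam m T l \<theta>) \<eta>)"

end

theory Submission
  imports Defs
begin

(* On the common support, q_theta^lambda = Z(theta)^(-lambda) (1 + lambda <theta, T>) with
   Z = exp phi, so the Renyi integral of q_a against q_theta only sees the escort mean E a of q_a:
   RD_alpha(q_a, q_theta) = phi(theta) - c_lambda(theta, E a) + psi(a), and for lambda = 0 this is
   the usual KL identity. As RD is nonnegative and vanishes at theta = a, the map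
   theta |-> phi(theta) - c_lambda(theta, E a) is minimal at a; with a = theta_P, whose escort mean
   is M, this says that theta_P minimises U.
   Since -log q_theta(x_i) = phi(theta) - c_lambda(theta, T x_i), the loss L is U with
   c_lambda(theta, M) replaced by the matching convex combination of the c_lambda(theta, T x_i) and
   c_lambda(theta, E theta'). Now c_lambda(theta, .) = log(1 + lambda <theta, .>) / lambda is concave
   for lambda > 0, convex for lambda < 0 and linear for lambda = 0, so Jensen gives U <= L, L <= U
   and L = U respectively. *)

definition coupling :: "real \<Rightarrow> 'h::real_inner \<Rightarrow> 'h \<Rightarrow> real" where
  "coupling l u v = (if l = 0 then u \<bullet> v else ln (1 + l * (u \<bullet> v)) / l)"

lemma clam_eq_coupling: "1 + l * (u \<bullet> v) > 0 \<Longrightarrow> clam l u v = ereal (coupling l u v)"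
  by (auto simp: clam_def coupling_def elog_def)

lemma expc_eq_exp_coupling:
  "expc l u v = (if 1 + l * (u \<bullet> v) > 0 then exp (coupling l u v) else 0)"
  by (auto simp: expc_def clam_def coupling_def elog_def)

lemma expc_nonneg: "expc l u v \<ge> 0"
  by (simp add: expc_def)

lemma coupling_sum_concave:
  fixes v :: "'i \<Rightarrow> 'h::real_inner"
  assumes "finite I" "I \<noteq> {}" "sum w I = 1" "\<And>i. i \<in> I \<Longrightarrow> w i \<ge> 0"
    and pos: "\<And>i. i \<in> I \<Longrightarrow> 1 + l * (\<theta> \<bullet> v i) > 0"
  shows "l * (\<Sum>i\<in>I. w i * coupling l \<theta> (v i)) \<le> l * coupling l \<theta> (\<Sum>i\<in>I. w i *\<^sub>R v i)"
proof (cases "l = 0")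
  case False
  define y where "y i = 1 + l * (\<theta> \<bullet> v i)" for i
  have "convex_on {0<..} (\<lambda>t. - ln t)"
    using ln_concave by (simp add: concave_on_def)
  then have "- ln (\<Sum>i\<in>I. w i *\<^sub>R y i) \<le> (\<Sum>i\<in>I. w i * - ln (y i))"
    using assms pos by (intro convex_on_sum) (auto simp: y_def)
  moreover have "(\<Sum>i\<in>I. w i *\<^sub>R y i) = 1 + l * (\<theta> \<bullet> (\<Sum>i\<in>I. w i *\<^sub>R v i))"
    using assms(3) by (simp add: y_def algebra_simps sum.distrib inner_sum_right sum_distrib_left)
  ultimately show ?thesis
    using False by (simp add: coupling_def y_def sum_distrib_left sum_negf)
qed simp

lemma weighted_geom_le_arith:
  fixes a p r :: real
  assumes "0 \<le> a" "a \<le> 1" "0 \<le> p" "0 \<le> r"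
  shows "p powr a * r powr (1 - a) \<le> a * p + (1 - a) * r"
  using assms Youngs_inequality_0[of a "1 - a" p r] by (cases "p = 0 \<or> r = 0") auto

lemma weighted_geom_ge_arith:
  fixes a p r :: real
  assumes "1 \<le> a" "0 \<le> p" "0 < r"
  shows "a * p + (1 - a) * r \<le> p powr a * r powr (1 - a)"
proof (cases "p = 0")
  case False
  define X where "X = p powr a * r powr (1 - a)"
  have "X powr (1 / a) * r powr (1 - 1 / a) \<le> (1 / a) * X + (1 - 1 / a) * r"
    using assms False by (intro Youngs_inequality_0) (auto simp: X_def field_simps)
  moreover have "X powr (1 / a) * r powr (1 - 1 / a) = p"
  proof -
    have "X powr (1 / a) = p * r powr ((1 - a) / a)"
      using assms by (simp add: X_def powr_mult powr_powr)
    then show ?thesis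
      using assms by (simp add: powr_add[symmetric] field_simps)
  qed
  ultimately have "a * p \<le> X + (a - 1) * r"
    using assms by (simp add: field_simps)
  then show ?thesis
    by (simp add: X_def algebra_simps)
qed (use assms in \<open>simp add: mult_nonpos_nonneg\<close>)

lemma coupling_proximal_mixture:
  fixes v :: "nat \<Rightarrow> 'h::real_inner" and N :: nat
  assumes "\<tau> > 0" "N > 0"
    and pos: "\<And>i. i < N \<Longrightarrow> 1 + l * (\<theta> \<bullet> v i) > 0" "1 + l * (\<theta> \<bullet> e) > 0"
  defines "M \<equiv> (real N * \<tau> / (1 + real N * \<tau>)) *\<^sub>R ((1 / real N) *\<^sub>R (\<Sum>i<N. v i))
               + (1 / (1 + real N * \<tau>)) *\<^sub>R e"
  shows "l * ((\<Sum>i<N. coupling l \<theta> (v i)) + coupling l \<theta> e / \<tau>)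
           \<le> l * ((1 + real N * \<tau>) / \<tau> * coupling l \<theta> M)"
    and "l = 0 \<Longrightarrow> (\<Sum>i<N. coupling l \<theta> (v i)) + coupling l \<theta> e / \<tau>
           = (1 + real N * \<tau>) / \<tau> * coupling l \<theta> M"
proof -
  define X where "X = (\<Sum>i<N. coupling l \<theta> (v i)) + coupling l \<theta> e / \<tau>"
  define K where "K = (1 + real N * \<tau>) / \<tau>"
  have d: "1 + real N * \<tau> > 0"
    using assms(1) by (simp add: add_pos_nonneg)
  then have K: "K > 0" "K * (\<tau> / (1 + real N * \<tau>)) = 1"
    using assms(1) by (simp_all add: K_def)
  define w where "w i = (if i < N then \<tau> else 1) / (1 + real N * \<tau>)" for i
  define u where "u i = (if i < N then v i else e)" for i
  have sum_atMost_N: "(\<Sum>i\<le>N. f i) = (\<Sum>i<N. f i) + f N" for f :: "nat \<Rightarrow> 'a::comm_monoid_add"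
    by (simp add: lessThan_Suc_atMost[symmetric])
  have M: "M = (\<Sum>i\<le>N. w i *\<^sub>R u i)"
    using assms(1,2) by (simp add: M_def sum_atMost_N w_def u_def scaleR_sum_right)
  have W: "(\<Sum>i\<le>N. w i * coupling l \<theta> (u i)) = \<tau> / (1 + real N * \<tau>) * X"
  proof -
    have "(\<Sum>i\<le>N. w i * coupling l \<theta> (u i))
        = \<tau> / (1 + real N * \<tau>) * (\<Sum>i<N. coupling l \<theta> (v i)) + coupling l \<theta> e / (1 + real N * \<tau>)"
      by (simp add: sum_atMost_N w_def u_def sum_distrib_left)
    then show ?thesis
      using assms(1) by (simp add: X_def distrib_left)
  qed
  have "l * (\<Sum>i\<le>N. w i * coupling l \<theta> (u i)) \<le> l * coupling l \<theta> M"
    unfolding M using d assms(1) pos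
    by (intro coupling_sum_concave) (auto simp: sum_atMost_N w_def u_def add_divide_distrib[symmetric])
  then have "\<tau> / (1 + real N * \<tau>) * (l * X) \<le> l * coupling l \<theta> M"
    by (simp add: W mult.left_commute)
  from mult_left_mono[OF this, of K] K assms(1) show "l * X \<le> l * (K * coupling l \<theta> M)"
    by (simp add: mult.left_commute)
  show "X = K * coupling l \<theta> M" if "l = 0"
  proof -
    have "coupling l \<theta> M = (\<Sum>i\<le>N. w i * coupling l \<theta> (u i))"
      using that by (simp add: M coupling_def inner_sum_right)
    then show ?thesis
      using K assms(1) by (simp add: W)
  qed
qed

lemma renyi_div_self:
  assumes "\<And>x. x \<in> space m \<Longrightarrow> p x \<ge> 0" "integrable m p" "(\<integral>x. p x \<partial>m) = 1"
  shows "renyi_div m \<alpha> p p = 0"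
proof (cases "\<alpha> = 1")
  case True
  have "(\<lambda>x. if p x > 0 then p x * ln (p x / p x) else 0) = (\<lambda>x. 0)"
    by auto
  then show ?thesis
    using True by (simp add: renyi_div_def KL_def)
next
  case False
  have "(\<integral>\<^sup>+x. ennreal (p x powr \<alpha> * p x powr (1 - \<alpha>)) \<partial>m) = (\<integral>\<^sup>+x. ennreal (p x) \<partial>m)"
    using assms(1) by (intro nn_integral_cong) (simp add: powr_add[symmetric])
  also have "\<dots> = 1"
    using assms by (simp add: nn_integral_eq_integral)
  finally show ?thesis
    using False by (simp add: renyi_div_def elog_enn_def)
qed

lemma KL_nonneg:
  assumes "\<And>x. x \<in> space m \<Longrightarrow> p x \<ge> 0" "integrable m p" "(\<integral>x. p x \<partial>m) = 1"
    and "\<And>x. x \<in> space m \<Longrightarrow> r x \<ge> 0" "integrable m r" "(\<integral>x. r x \<partial>m) = 1"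
    and abs_cont: "\<And>x. x \<in> space m \<Longrightarrow> p x > 0 \<Longrightarrow> r x > 0"
    and integrable: "integrable m (\<lambda>x. if p x > 0 then p x * ln (p x / r x) else 0)"
  shows "KL m p r \<ge> 0"
proof -
  have "p x - r x \<le> (if p x > 0 then p x * ln (p x / r x) else 0)" if "x \<in> space m" for x
  proof (cases "p x > 0")
    case True
    then have "ln (r x / p x) \<le> r x / p x - 1"
      using abs_cont[OF that] by (intro ln_le_minus_one) simp
    then show ?thesis
      using True abs_cont[OF that] by (simp add: ln_div field_simps)
  qed (use assms(1)[OF that] assms(4)[OF that] in simp)
  then have "(\<integral>x. p x - r x \<partial>m) \<le> (\<integral>x. (if p x > 0 then p x * ln (p x / r x) else 0) \<partial>m)"
    using assms by (intro integral_mono) auto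
  then show ?thesis
    using assms by (simp add: KL_def)
qed

(* abs_cont cannot be dropped: for alpha > 1 the junk value 0 powr (1 - alpha) = 0 would make
   the integrand vanish where r = 0 < p. *)
lemma renyi_div_nonneg:
  assumes "\<alpha> > 0"
    and p: "\<And>x. x \<in> space m \<Longrightarrow> p x \<ge> 0" "integrable m p" "(\<integral>x. p x \<partial>m) = 1"
    and r: "\<And>x. x \<in> space m \<Longrightarrow> r x \<ge> 0" "integrable m r" "(\<integral>x. r x \<partial>m) = 1"
    and abs_cont: "\<And>x. x \<in> space m \<Longrightarrow> p x > 0 \<Longrightarrow> r x > 0"
    and KL_integrable: "\<alpha> = 1 \<Longrightarrow> integrable m (\<lambda>x. if p x > 0 then p x * ln (p x / r x) else 0)"
  shows "renyi_div m \<alpha> p r \<ge> 0"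
proof -
  define f where "f x = p x powr \<alpha> * r x powr (1 - \<alpha>)" for x
  define Z where "Z = (\<integral>\<^sup>+x. ennreal (f x) \<partial>m)"
  have mixture: "integrable m (\<lambda>x. \<alpha> * p x + (1 - \<alpha>) * r x)"
    "(\<integral>x. \<alpha> * p x + (1 - \<alpha>) * r x \<partial>m) = 1"
    using p r by auto
  have renyi_div_Z: "\<alpha> \<noteq> 1 \<Longrightarrow> renyi_div m \<alpha> p r = ereal (1 / (\<alpha> - 1)) * elog_enn Z"
    by (simp add: renyi_div_def Z_def f_def)
  consider "\<alpha> = 1" | "\<alpha> < 1" | "\<alpha> > 1"
    by linarith
  then show ?thesis
  proof cases
    case 1
    then show ?thesis
      using KL_nonneg[OF p r abs_cont KL_integrable] by (simp add: renyi_div_def)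
  next
    case 2
    have "Z \<le> (\<integral>\<^sup>+x. ennreal (\<alpha> * p x + (1 - \<alpha>) * r x) \<partial>m)"
      unfolding Z_def f_def using p r assms(1) 2
      by (intro nn_integral_mono ennreal_leI weighted_geom_le_arith) auto
    also have "\<dots> = 1"
      using mixture p r assms(1) 2 by (subst nn_integral_eq_integral) auto
    finally obtain z where "Z = ennreal z" "0 \<le> z" "z \<le> 1"
      by (cases Z rule: ennreal_cases) (auto simp: top_unique)
    then have "elog_enn Z \<le> 0"
      by (auto simp: elog_enn_def)
    then show ?thesis
      using 2 by (cases "elog_enn Z") (auto simp: renyi_div_Z divide_nonpos_neg)
  next
    case 3
    have f_ge: "\<alpha> * p x + (1 - \<alpha>) * r x \<le> f x" if "x \<in> space m" for x
    proof (cases "p x > 0")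
      case True
      then show ?thesis
        using 3 abs_cont[OF that] by (simp add: f_def weighted_geom_ge_arith)
    qed (use 3 p(1)[OF that] r(1)[OF that] in \<open>simp add: f_def mult_nonpos_nonneg\<close>)
    show ?thesis
    proof (cases "Z = \<infinity>")
      case False
      have f_integrable: "integrable m f"
        using False p r unfolding Z_def f_def
        by (intro integrableI_nonneg) (auto simp: top.not_eq_extremum)
      have "Z = ennreal (\<integral>x. f x \<partial>m)"
        unfolding Z_def by (rule nn_integral_eq_integral[OF f_integrable]) (simp add: f_def)
      moreover have "1 \<le> (\<integral>x. f x \<partial>m)"
        using integral_mono[OF mixture(1) f_integrable f_ge] mixture(2) by simp
      ultimately show ?thesis
        using 3 by (simp add: renyi_div_Z elog_enn_def)
    qed (use 3 in \<open>simp add: renyi_div_Z elog_enn_def\<close>)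
  qed
qed

locale lambda_exponential_family =
  fixes m :: "'x measure" and T :: "'x \<Rightarrow> 'h::euclidean_space" and l :: real and S :: "'x set"
  assumes T_measurable[measurable]: "T \<in> borel_measurable m"
    and A: "assumption_A m T l"
    and B: "assumption_B m T l"
    and supp_eq: "\<And>\<theta>. \<theta> \<in> dom_phi m T l \<Longrightarrow> supp m T l \<theta> = S"
begin

abbreviation "D \<equiv> dom_phi m T l"
abbreviation "q \<equiv> qlam m T l"

definition normalizer :: "'h \<Rightarrow> real" where
  "normalizer \<theta> = enn2real (Zlam m T l \<theta>)"

definition escort_mass :: "'h \<Rightarrow> real" where
  "escort_mass a = (\<integral>x. q a x powr (1 - l) \<partial>m)"

definition escort_mean :: "'h \<Rightarrow> 'h" where
  "escort_mean a = expect m (escort m (1 - l) (q a)) T"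

lemma Zlam_finite_nonzero:
  assumes "\<theta> \<in> D"
  shows "Zlam m T l \<theta> \<noteq> top" "Zlam m T l \<theta> \<noteq> 0"
  using assms A
  by (auto simp: dom_phi_def philam_def elog_enn_def assumption_A_def split: if_splits)

lemma normalizer_pos: "\<theta> \<in> D \<Longrightarrow> normalizer \<theta> > 0"
  using Zlam_finite_nonzero[of \<theta>]
  by (auto simp: normalizer_def enn2real_positive_iff top.not_eq_extremum zero_less_iff_neq_zero)

lemma philam_eq: "\<theta> \<in> D \<Longrightarrow> philam m T l \<theta> = ereal (ln (normalizer \<theta>))"
  using Zlam_finite_nonzero[of \<theta>] by (simp add: philam_def elog_enn_def normalizer_def)

lemma expc_measurable[measurable]: "(\<lambda>x. expc l \<theta> (T x)) \<in> borel_measurable m"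
  unfolding expc_eq_exp_coupling coupling_def by measurable

lemma q_measurable[measurable]: "q \<theta> \<in> borel_measurable m"
  unfolding qlam_def[abs_def] by measurable

lemma q_nonneg: "q \<theta> x \<ge> 0"
  by (simp add: qlam_def expc_nonneg)

lemma mem_S_iff: "\<theta> \<in> D \<Longrightarrow> x \<in> space m \<Longrightarrow> x \<in> S \<longleftrightarrow> 1 + l * (\<theta> \<bullet> T x) > 0"
  using supp_eq[of \<theta>] by (auto simp: supp_def)

lemma q_eq:
  assumes "\<theta> \<in> D" "x \<in> space m"
  shows "q \<theta> x = (if x \<in> S then exp (coupling l \<theta> (T x) - ln (normalizer \<theta>)) else 0)"
  using mem_S_iff[OF assms] philam_eq[OF assms(1)]
  by (simp add: qlam_def expc_eq_exp_coupling exp_diff exp_minus field_simps)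

lemma ln_q:
  assumes "\<theta> \<in> D" "x \<in> space m" "x \<in> S"
  shows "ln (q \<theta> x) = coupling l \<theta> (T x) - ln (normalizer \<theta>)"
  using assms(3) by (simp add: q_eq[OF assms(1,2)])

lemma q_pos_iff: "\<theta> \<in> D \<Longrightarrow> x \<in> space m \<Longrightarrow> q \<theta> x > 0 \<longleftrightarrow> x \<in> S"
  by (simp add: q_eq)

lemma q_integrable:
  assumes "\<theta> \<in> D"
  shows "integrable m (q \<theta>)" "(\<integral>x. q \<theta> x \<partial>m) = 1"
proof -
  have q: "q \<theta> = (\<lambda>x. expc l \<theta> (T x) / normalizer \<theta>)"
    using philam_eq[OF assms] by (auto simp: qlam_def exp_minus normalizer_pos[OF assms] divide_inverse)
  have "integrable m (\<lambda>x. expc l \<theta> (T x))"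
    using Zlam_finite_nonzero(1)[OF assms]
    by (intro integrableI_nonneg) (auto simp: Zlam_def top.not_eq_extremum expc_nonneg)
  moreover have "(\<integral>x. expc l \<theta> (T x) \<partial>m) = normalizer \<theta>"
    unfolding normalizer_def Zlam_def by (subst integral_eq_nn_integral) (auto simp: expc_nonneg)
  ultimately show "integrable m (q \<theta>)" "(\<integral>x. q \<theta> x \<partial>m) = 1"
    using normalizer_pos[OF assms] by (simp_all add: q)
qed

lemma escort_power_integrable:
  assumes "a \<in> D"
  shows "integrable m (\<lambda>x. q a x powr (1 - l))"
    and "integrable m (\<lambda>x. q a x powr (1 - l) *\<^sub>R T x)"
    and "escort_mass a > 0"
proof -
  have "compatible m T l (1 - l) (q a) a"
    using B assms by (auto simp: assumption_B_def)
  moreover have "q a x * indicator S x = q a x" if "x \<in> space m" for x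
    using q_eq[OF assms that] by (auto simp: indicator_def)
  ultimately have nn: "(\<integral>\<^sup>+x. ennreal (q a x powr (1 - l)) \<partial>m) \<in> {0<..<top}"
    and integrable: "integrable m (\<lambda>x. q a x powr (1 - l) *\<^sub>R T x)"
    using supp_eq[OF assms]
    by (auto simp: compatible_def Let_def cong: nn_integral_cong Bochner_Integration.integrable_cong)
  show "integrable m (\<lambda>x. q a x powr (1 - l))"
    using nn by (intro integrableI_nonneg) auto
  show "integrable m (\<lambda>x. q a x powr (1 - l) *\<^sub>R T x)"
    by (fact integrable)
  have "escort_mass a = enn2real (\<integral>\<^sup>+x. ennreal (q a x powr (1 - l)) \<partial>m)"
    unfolding escort_mass_def by (rule integral_eq_nn_integral) auto
  then show "escort_mass a > 0"
    using nn by (simp add: enn2real_positive_iff)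
qed

lemma integral_escort_affine:
  assumes "a \<in> D"
  shows "integrable m (\<lambda>x. q a x powr (1 - l) * (c + v \<bullet> T x))"
    and "(\<integral>x. q a x powr (1 - l) * (c + v \<bullet> T x) \<partial>m) = escort_mass a * (c + v \<bullet> escort_mean a)"
proof -
  note integrable = escort_power_integrable[OF assms]
  have split: "q a x powr (1 - l) * (c + v \<bullet> T x) = c * q a x powr (1 - l) + v \<bullet> (q a x powr (1 - l) *\<^sub>R T x)"
    for x by (simp add: algebra_simps)
  show "integrable m (\<lambda>x. q a x powr (1 - l) * (c + v \<bullet> T x))"
    unfolding split using integrable
    by (intro Bochner_Integration.integrable_add integrable_mult_right integrable_inner_right)
  have "(\<integral>x. q a x powr (1 - l) * (c + v \<bullet> T x) \<partial>m)
      = c * escort_mass a + v \<bullet> (\<integral>x. q a x powr (1 - l) *\<^sub>R T x \<partial>m)"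
    unfolding split escort_mass_def
    using integrable integrable_inner_right[OF integrable(2)]
    by (simp only: Bochner_Integration.integral_add integrable_mult_right integral_mult_right_zero
        integral_inner_right)
  also have "(\<integral>x. q a x powr (1 - l) *\<^sub>R T x \<partial>m) = escort_mass a *\<^sub>R escort_mean a"
  proof -
    have "escort_mean a = (\<integral>x. (1 / escort_mass a) *\<^sub>R (q a x powr (1 - l) *\<^sub>R T x) \<partial>m)"
      unfolding escort_mean_def expect_def escort_def escort_mass_def[symmetric]
      by (intro Bochner_Integration.integral_cong) auto
    also have "\<dots> = (1 / escort_mass a) *\<^sub>R (\<integral>x. q a x powr (1 - l) *\<^sub>R T x \<partial>m)"
      by (rule integral_scaleR_right)
    finally show ?thesis
      using integrable(3) by simp
  qed
  finally show "(\<integral>x. q a x powr (1 - l) * (c + v \<bullet> T x) \<partial>m) = escort_mass a * (c + v \<bullet> escort_mean a)"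
    by (simp add: algebra_simps)
qed

lemma escort_mean_pos:
  assumes "a \<in> D" "\<theta> \<in> D"
  shows "1 + l * (\<theta> \<bullet> escort_mean a) > 0"
proof (rule ccontr)
  define f where "f x = q a x powr (1 - l) * (1 + l * (\<theta> \<bullet> T x))" for x
  note affine = integral_escort_affine[OF assms(1), of 1 "l *\<^sub>R \<theta>"]
  have f_nonneg: "f x \<ge> 0" and f_zero: "f x = 0 \<Longrightarrow> q a x powr (1 - l) = 0" if "x \<in> space m" for x
    using mem_S_iff[OF assms(2) that] q_eq[OF assms(1) that] by (auto simp: f_def)
  have f_integrable: "integrable m f"
    using affine(1) by (simp add: f_def[abs_def])
  assume "\<not> ?thesis"
  then have "(\<integral>x. f x \<partial>m) \<le> 0"
    using affine(2) escort_power_integrable(3)[OF assms(1)]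
    by (simp add: f_def mult_nonneg_nonpos)
  then have "(\<integral>x. f x \<partial>m) = 0"
    using f_nonneg by (intro antisym integral_nonneg) auto
  then have "AE x in m. f x = 0"
    using integral_nonneg_eq_0_iff_AE[OF f_integrable] f_nonneg by auto
  then have "AE x in m. q a x powr (1 - l) = 0"
    using f_zero by auto
  then have "escort_mass a = 0"
    unfolding escort_mass_def by (simp add: integral_eq_zero_AE)
  then show False
    using escort_power_integrable(3)[OF assms(1)] by simp
qed

lemma integral_q_powr_mult:
  assumes "l \<noteq> 0" "a \<in> D" "\<theta> \<in> D"
  defines "I \<equiv> exp (- l * ln (normalizer \<theta>)) * (escort_mass a * (1 + l * (\<theta> \<bullet> escort_mean a)))"
  shows "integrable m (\<lambda>x. q a x powr (1 - l) * q \<theta> x powr l)"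
    and "(\<integral>x. q a x powr (1 - l) * q \<theta> x powr l \<partial>m) = I"
proof -
  have pointwise: "q a x powr (1 - l) * q \<theta> x powr l
      = exp (- l * ln (normalizer \<theta>)) * (q a x powr (1 - l) * (1 + (l *\<^sub>R \<theta>) \<bullet> T x))"
    if "x \<in> space m" for x
  proof (cases "x \<in> S")
    case True
    then have "1 + l * (\<theta> \<bullet> T x) > 0"
      using mem_S_iff[OF assms(3) that] by simp
    moreover have "q \<theta> x powr l = exp (ln (1 + l * (\<theta> \<bullet> T x)) - l * ln (normalizer \<theta>))"
      using True assms(1) by (simp add: q_eq[OF assms(3) that] powr_def coupling_def algebra_simps)
    ultimately have "q \<theta> x powr l = exp (- l * ln (normalizer \<theta>)) * (1 + l * (\<theta> \<bullet> T x))"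
      by (simp add: exp_diff exp_minus field_simps)
    then show ?thesis
      by simp
  qed (simp add: q_eq[OF assms(2) that])
  note affine = integral_escort_affine[OF assms(2), of 1 "l *\<^sub>R \<theta>"]
  show "integrable m (\<lambda>x. q a x powr (1 - l) * q \<theta> x powr l)"
    using affine(1) by (subst Bochner_Integration.integrable_cong[OF refl pointwise]) auto
  show "(\<integral>x. q a x powr (1 - l) * q \<theta> x powr l \<partial>m) = I"
    using affine(2) by (subst Bochner_Integration.integral_cong[OF refl pointwise]) (auto simp: I_def)
qed

lemma integral_q_affine:
  assumes "l = 0" "a \<in> D"
  shows "integrable m (\<lambda>x. q a x * (c + v \<bullet> T x))"
    and "(\<integral>x. q a x * (c + v \<bullet> T x) \<partial>m) = c + v \<bullet> escort_mean a"
proof -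
  have powr_q: "q a x powr (1 - l) = q a x" for x
    using assms(1) q_nonneg[of a x] by simp
  have "escort_mass a = 1"
    using q_integrable(2)[OF assms(2)] by (simp add: escort_mass_def powr_q)
  then show "integrable m (\<lambda>x. q a x * (c + v \<bullet> T x))"
    and "(\<integral>x. q a x * (c + v \<bullet> T x) \<partial>m) = c + v \<bullet> escort_mean a"
    using integral_escort_affine[OF assms(2), of c v] by (simp_all add: powr_q)
qed

lemma KL_integrand_q:
  assumes "l = 0" "a \<in> D" "\<theta> \<in> D" "x \<in> space m"
  shows "(if q a x > 0 then q a x * ln (q a x / q \<theta> x) else 0)
           = q a x * ((ln (normalizer \<theta>) - ln (normalizer a)) + (a - \<theta>) \<bullet> T x)"
proof -
  have "x \<in> S"
    using mem_S_iff[OF assms(2,4)] assms(1) by simp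
  then have "q a x > 0" "q \<theta> x > 0"
    using q_pos_iff[OF assms(2,4)] q_pos_iff[OF assms(3,4)] by simp_all
  moreover have "coupling l u v = u \<bullet> v" for u v :: 'h
    using assms(1) by (simp add: coupling_def)
  ultimately have "ln (q a x / q \<theta> x) = (ln (normalizer \<theta>) - ln (normalizer a)) + (a - \<theta>) \<bullet> T x"
    using \<open>x \<in> S\<close> by (simp add: ln_div ln_q[OF assms(2,4)] ln_q[OF assms(3,4)] inner_diff_left)
  with \<open>q a x > 0\<close> show ?thesis
    by simp
qed

lemma renyi_div_q:
  assumes "a \<in> D" "\<theta> \<in> D"
  shows "renyi_div m (1 - l) (q a) (q \<theta>)
           = ereal (ln (normalizer \<theta>) - coupling l \<theta> (escort_mean a) + psilam m T l a)"
proof (cases "l = 0")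
  case False
  define I where "I = exp (- l * ln (normalizer \<theta>)) * (escort_mass a * (1 + l * (\<theta> \<bullet> escort_mean a)))"
  have mass: "escort_mass a > 0"
    using escort_power_integrable(3)[OF assms(1)] .
  have mean: "1 + l * (\<theta> \<bullet> escort_mean a) > 0"
    using escort_mean_pos[OF assms] .
  have "(\<integral>\<^sup>+x. ennreal (q a x powr (1 - l) * q \<theta> x powr l) \<partial>m) = ennreal I"
    using integral_q_powr_mult[OF False assms] unfolding I_def
    by (subst nn_integral_eq_integral) auto
  moreover have "I > 0"
    using mass mean by (simp add: I_def)
  ultimately have "renyi_div m (1 - l) (q a) (q \<theta>) = ereal (ln I / - l)"
    using False by (simp add: renyi_div_def elog_enn_def)
  moreover have "ln I = - l * ln (normalizer \<theta>) + ln (escort_mass a) + ln (1 + l * (\<theta> \<bullet> escort_mean a))"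
    using mass mean by (simp add: I_def ln_mult)
  moreover have "psilam m T l a = - ln (escort_mass a) / l"
    using False by (simp add: psilam_def renyi_entropy_def escort_mass_def)
  ultimately show ?thesis
    using False by (simp add: coupling_def field_simps)
next
  case True
  have "(\<integral>x. q a x * ln (q a x) \<partial>m) = (\<integral>x. q a x * (- ln (normalizer a) + a \<bullet> T x) \<partial>m)"
  proof (intro Bochner_Integration.integral_cong refl)
    fix x assume x: "x \<in> space m"
    then have "x \<in> S"
      using mem_S_iff[OF assms(1) x] True by simp
    moreover have "coupling l a (T x) = a \<bullet> T x"
      using True by (simp add: coupling_def)
    ultimately show "q a x * ln (q a x) = q a x * (- ln (normalizer a) + a \<bullet> T x)"
      by (simp add: ln_q[OF assms(1) x])
  qed
  also have "\<dots> = - ln (normalizer a) + a \<bullet> escort_mean a"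
    by (rule integral_q_affine(2)[OF True assms(1)])
  finally have psi: "psilam m T l a = a \<bullet> escort_mean a - ln (normalizer a)"
    using True by (simp add: psilam_def renyi_entropy_def)
  have "(\<integral>x. (if q a x > 0 then q a x * ln (q a x / q \<theta> x) else 0) \<partial>m)
      = (\<integral>x. q a x * ((ln (normalizer \<theta>) - ln (normalizer a)) + (a - \<theta>) \<bullet> T x) \<partial>m)"
    using KL_integrand_q[OF True assms] by (intro Bochner_Integration.integral_cong) auto
  also have "\<dots> = ln (normalizer \<theta>) - ln (normalizer a) + (a - \<theta>) \<bullet> escort_mean a"
    by (rule integral_q_affine(2)[OF True assms(1)])
  moreover have "renyi_div m (1 - l) (q a) (q \<theta>) = KL m (q a) (q \<theta>)"
    using True by (simp add: renyi_div_def)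
  moreover have "coupling l \<theta> (escort_mean a) = \<theta> \<bullet> escort_mean a"
    using True by (simp add: coupling_def)
  ultimately show ?thesis
    using psi by (simp add: KL_def inner_diff_left)
qed

lemma ln_normalizer_minus_coupling_le:
  assumes "a \<in> D" "\<theta> \<in> D"
  shows "ln (normalizer a) - coupling l a (escort_mean a)
           \<le> ln (normalizer \<theta>) - coupling l \<theta> (escort_mean a)"
proof -
  have "renyi_div m (1 - l) (q a) (q a) = 0"
    using q_integrable[OF assms(1)] by (intro renyi_div_self) (auto simp: q_nonneg)
  moreover have "renyi_div m (1 - l) (q a) (q \<theta>) \<ge> 0"
  proof (rule renyi_div_nonneg)
    show "1 - l > 0"
      using A by (simp add: assumption_A_def)
    show "q \<theta> x > 0" if "x \<in> space m" "q a x > 0" for x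
      using that q_pos_iff[OF assms(1) that(1)] q_pos_iff[OF assms(2) that(1)] by simp
    show "integrable m (\<lambda>x. if q a x > 0 then q a x * ln (q a x / q \<theta> x) else 0)" if "1 - l = 1"
      using that integral_q_affine(1)[OF _ assms(1)] KL_integrand_q[OF _ assms]
      by (subst Bochner_Integration.integrable_cong[OF refl]) auto
  qed (use q_integrable[OF assms(1)] q_integrable[OF assms(2)] q_nonneg in auto)
  ultimately show ?thesis
    using renyi_div_q[OF assms(1,1)] renyi_div_q[OF assms] by simp
qed

lemma proximal_objective_eq:
  fixes x :: "nat \<Rightarrow> 'x" and N :: nat
  assumes "\<theta>' \<in> D" "\<theta> \<in> D" "\<tau> > 0" and x: "\<And>i. i < N \<Longrightarrow> x i \<in> space m" "\<And>i. i < N \<Longrightarrow> x i \<in> S"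
  shows "ereal (- (\<Sum>i<N. ln (q \<theta> (x i)))) + ereal (1 / \<tau>) * renyi_div m (1 - l) (q \<theta>') (q \<theta>)
    = ereal ((1 + real N * \<tau>) / \<tau> * ln (normalizer \<theta>)
        - ((\<Sum>i<N. coupling l \<theta> (T (x i))) + coupling l \<theta> (escort_mean \<theta>') / \<tau>)
        + psilam m T l \<theta>' / \<tau>)"
proof -
  have "(\<Sum>i<N. ln (q \<theta> (x i))) = (\<Sum>i<N. coupling l \<theta> (T (x i)) - ln (normalizer \<theta>))"
    using x by (intro sum.cong) (auto simp: ln_q[OF assms(2)])
  then have log_likelihood:
    "(\<Sum>i<N. ln (q \<theta> (x i))) = (\<Sum>i<N. coupling l \<theta> (T (x i))) - real N * ln (normalizer \<theta>)"
    by (simp add: sum_subtractf)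
  show ?thesis
    unfolding renyi_div_q[OF assms(1,2)] log_likelihood using assms(3)
    by (simp add: field_simps)
qed

end

theorem proposition11:
  fixes m :: "'x measure" and T :: "'x \<Rightarrow> 'h::euclidean_space" and l :: real
    and N :: nat and x :: "nat \<Rightarrow> 'x" and \<tau> :: real and \<theta>' \<theta>P :: 'h
  defines "\<alpha> \<equiv> 1 - l"
  defines "Mv \<equiv> (real N * \<tau> / (1 + real N * \<tau>)) *\<^sub>R ((1 / real N) *\<^sub>R (\<Sum>i<N. T (x i)))
               + (1 / (1 + real N * \<tau>)) *\<^sub>R expect m (escort m \<alpha> (qlam m T l \<theta>')) T"
  defines "L \<equiv> (\<lambda>\<theta>. ereal (- (\<Sum>i<N. ln (qlam m T l \<theta> (x i))))
               + ereal (1 / \<tau>) * renyi_div m \<alpha> (qlam m T l \<theta>') (qlam m T l \<theta>))"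
  defines "U \<equiv> (\<lambda>\<theta>. ereal ((1 + real N * \<tau>) / \<tau>) * (philam m T l \<theta> - clam l \<theta> Mv)
               + ereal (1 / \<tau> * psilam m T l \<theta>'))"
  assumes alpha_pos: "\<alpha> > 0"
    and T_meas: "T \<in> borel_measurable m"
    and A: "assumption_A m T l"
    and B: "assumption_B m T l"
    and N_pos: "N > 0"
    and x_in: "\<And>i. i < N \<Longrightarrow> x i \<in> space m"
    and x_supp: "\<And>i \<theta>. i < N \<Longrightarrow> \<theta> \<in> dom_phi m T l \<Longrightarrow> x i \<in> supp m T l \<theta>"
    and tau_pos: "\<tau> > 0"
    and \<theta>'_dom: "\<theta>' \<in> dom_phi m T l"
    and \<theta>P_dom: "\<theta>P \<in> dom_phi m T l"
    and \<theta>P_mean: "expect m (escort m \<alpha> (qlam m T l \<theta>P)) T = Mv"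
  shows "(l = 0 \<longrightarrow>
            \<theta>P \<in> prox m T l (\<lambda>\<theta>. ereal (- (\<Sum>i<N. ln (qlam m T l \<theta> (x i))))) \<tau> \<theta>')
       \<and> (l \<noteq> 0 \<longrightarrow> (\<forall>\<theta> \<in> dom_phi m T l. U \<theta>P \<le> U \<theta>))
       \<and> (l < 0 \<longrightarrow> (\<forall>\<theta> \<in> dom_phi m T l. L \<theta> \<le> U \<theta>))
       \<and> (l > 0 \<longrightarrow> (\<forall>\<theta> \<in> dom_phi m T l. U \<theta> \<le> L \<theta>))"
proof -
  obtain S where S: "\<And>\<theta>. \<theta> \<in> dom_phi m T l \<Longrightarrow> supp m T l \<theta> = S"
    using B unfolding assumption_B_def by blast
  interpret lambda_exponential_family m T l S
    using T_meas A B S by unfold_locales auto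
  define K where "K = (1 + real N * \<tau>) / \<tau>"
  define E' where "E' = escort_mean \<theta>'"
  define C where "C \<theta> = (\<Sum>i<N. coupling l \<theta> (T (x i))) + coupling l \<theta> E' / \<tau>" for \<theta>
  have x_S: "x i \<in> S" if "i < N" for i
    using x_supp[OF that \<theta>'_dom] S[OF \<theta>'_dom] by simp
  have x_pos: "1 + l * (\<theta> \<bullet> T (x i)) > 0" if "\<theta> \<in> D" "i < N" for \<theta> i
    using mem_S_iff[OF that(1) x_in[OF that(2)]] x_S[OF that(2)] by simp
  have mean_P: "escort_mean \<theta>P = Mv"
    using \<theta>P_mean by (simp add: escort_mean_def \<alpha>_def)
  have Mv_eq: "Mv = (real N * \<tau> / (1 + real N * \<tau>)) *\<^sub>R ((1 / real N) *\<^sub>R (\<Sum>i<N. T (x i)))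
      + (1 / (1 + real N * \<tau>)) *\<^sub>R E'"
    by (simp add: Mv_def E'_def escort_mean_def \<alpha>_def)
  have L_eq: "L \<theta> = ereal (K * ln (normalizer \<theta>) - C \<theta> + psilam m T l \<theta>' / \<tau>)" if "\<theta> \<in> D" for \<theta>
    using proximal_objective_eq[OF \<theta>'_dom that tau_pos x_in x_S]
    by (simp add: L_def \<alpha>_def K_def C_def E'_def)
  have U_eq: "U \<theta> = ereal (K * (ln (normalizer \<theta>) - coupling l \<theta> Mv) + psilam m T l \<theta>' / \<tau>)"
    if "\<theta> \<in> D" for \<theta>
    using escort_mean_pos[OF \<theta>P_dom that]
    by (simp add: U_def K_def philam_eq[OF that] clam_eq_coupling mean_P)
  have C: "l * C \<theta> \<le> l * (K * coupling l \<theta> Mv)" "l = 0 \<Longrightarrow> C \<theta> = K * coupling l \<theta> Mv"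
    if "\<theta> \<in> D" for \<theta>
    using coupling_proximal_mixture[of \<tau> N l \<theta> "\<lambda>i. T (x i)" E', OF tau_pos N_pos x_pos[OF that]
        escort_mean_pos[OF \<theta>'_dom that, folded E'_def]]
    by (simp_all add: C_def K_def Mv_eq)
  have U_min: "U \<theta>P \<le> U \<theta>" if "\<theta> \<in> D" for \<theta>
    using mult_left_mono[OF ln_normalizer_minus_coupling_le[OF \<theta>P_dom that, unfolded mean_P], of K]
      tau_pos
    by (simp add: U_eq[OF that] U_eq[OF \<theta>P_dom] K_def add_pos_nonneg)
  have "L \<theta> = U \<theta>" if "l = 0" "\<theta> \<in> D" for \<theta>
    using C(2)[OF that(2) that(1)] by (simp add: L_eq[OF that(2)] U_eq[OF that(2)] algebra_simps)
  then have "\<theta>P \<in> prox m T l (\<lambda>\<theta>. ereal (- (\<Sum>i<N. ln (q \<theta> (x i))))) \<tau> \<theta>'" if "l = 0"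
    using that \<theta>P_dom U_min by (auto simp: prox_def L_def \<alpha>_def)
  moreover have "L \<theta> \<le> U \<theta>" if "l < 0" "\<theta> \<in> D" for \<theta>
    using C(1)[OF that(2)] that(1) by (simp add: L_eq[OF that(2)] U_eq[OF that(2)] algebra_simps)
  moreover have "U \<theta> \<le> L \<theta>" if "l > 0" "\<theta> \<in> D" for \<theta>
    using C(1)[OF that(2)] that(1) by (simp add: L_eq[OF that(2)] U_eq[OF that(2)] algebra_simps)
  ultimately show ?thesis
    using U_min by blast
qed

end
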